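(* Let $\mathcal{P}$ be a finite collection of parameterizations of vector cycles of length 5 in $\mathbb{Z}^3$. Then there exists some $t \in T$ that is not represented by any parameterization in $\mathcal{P}$.
   Context: $T$ is the set of positive integers $t \equiv 2 \pmod 4$ whose square-free part has at least one odd prime factor $p$ with $p \equiv 2 \pmod 3$. A parameterization of a vector cycle of length 5 in $\mathbb{Z}^3$ is a list of five vectors $w_1, \ldots, w_5$ whose coordinates are integer linear forms $\lambda x + \mu y$ ($\lambda, \mu \in \mathbb{Z}$) in two variables $x, y$, such that $w_1 + \cdots + w_5 = \mathbf{0}$ identically and the squared Euclidean norms $|w_1|^2, \ldots, |w_5|^2$ are all equal to one and the same binary quadratic form $F(x,y) = ax^2 + bxy + cy^2$. Such a parameterization represents a positive integer $t$ if there exist integers $x, y$ with $F(x,y) = t$ (i.e., substituting these $x,y$ yields five vectors of $\mathbb{Z}^3$, each of magnitude $\sqrt{t}$, summing to zero). *)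

theory Defs
  imports "HOL-Computational_Algebra.Computational_Algebra"
begin

definition sqfree_part :: "nat \<Rightarrow> nat" where
  "sqfree_part t = (\<Prod>p\<in>{p\<in>prime_factors t. odd (multiplicity p t)}. p)"

definition T_set :: "nat set" where
  "T_set = {t. t > 0 \<and> t mod 4 = 2 \<and>
      (\<exists>p. prime p \<and> odd p \<and> p mod 3 = 2 \<and> p dvd sqfree_part t)}"

text \<open>A candidate parameterization: W i j = (lambda, mu) is the j-th coordinate (j < 3)
  of the i-th vector (i < 5), the integer linear form lambda*x + mu*y.\<close>
type_synonym param = "nat \<Rightarrow> nat \<Rightarrow> int \<times> int"

definition lin_eval :: "param \<Rightarrow> nat \<Rightarrow> nat \<Rightarrow> int \<Rightarrow> int \<Rightarrow> int" where
  "lin_eval W i j x y = fst (W i j) * x + snd (W i j) * y"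

definition norm_sq :: "param \<Rightarrow> nat \<Rightarrow> int \<Rightarrow> int \<Rightarrow> int" where
  "norm_sq W i x y = (\<Sum>j<3. (lin_eval W i j x y)^2)"

definition cycle_param_with_form :: "param \<Rightarrow> int \<Rightarrow> int \<Rightarrow> int \<Rightarrow> bool" where
  "cycle_param_with_form W a b c \<longleftrightarrow>
     (\<forall>x y. \<forall>j<3. (\<Sum>i<5. lin_eval W i j x y) = 0) \<and>
     (\<forall>x y. \<forall>i<5. norm_sq W i x y = a * x^2 + b * x * y + c * y^2)"

definition cycle_param :: "param \<Rightarrow> bool" where
  "cycle_param W \<longleftrightarrow> (\<exists>a b c. cycle_param_with_form W a b c)"

definition represents :: "param \<Rightarrow> nat \<Rightarrow> bool" where
  "represents W t \<longleftrightarrow> (\<exists>a b c. cycle_param_with_form W a b c \<and>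
      (\<exists>x y. a * x^2 + b * x * y + c * y^2 = int t))"

end

theory Submission
  imports Defs "HOL-Number_Theory.Number_Theory"
begin

text \<open>The norm form F = norm_sq W 0 of a parameterization is a sum of three squares of
  integral linear forms, hence a positive semidefinite binary quadratic form a x^2 + 2 b x y + c y^2.
  For every such form there is an odd prime q that never divides a value of F exactly, i.e.
  q | F(x,y) implies q^2 | F(x,y). If D = a c - b^2 > 0, take q = 3 (mod 4) such that
  X^2 + D Y^2 has no non-trivial zero modulo q, and use a F = (a x + b y)^2 + D y^2 and
  c F = (b x + c y)^2 + D x^2. Such a q is a prime factor q = 3 (mod 4) of z^2 - D', where
  D = 4^k D' with 4 not dividing D' and z is coprime to D' (z is chosen by D' mod 8): then D is a
  square and, as -1 is not, -D is a non-square modulo q. If D = 0, then F is a rational multiple of the square of a linear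
  form, and any odd prime not dividing the multiplier works. The square-free number
  t = 2 * (product of 5 and the chosen primes) lies in T, and each chosen prime divides it
  exactly, so no F represents t.\<close>

subsection \<open>Primes congruent to 3 modulo 4\<close>

lemma prime_factor_mod4_eq_3:
  fixes n :: nat
  assumes "n mod 4 = 3"
  shows "\<exists>q. prime q \<and> q dvd n \<and> q mod 4 = 3"
  using assms
proof (induction n rule: less_induct)
  case (less n)
  show ?case
  proof (cases "prime n")
    case True
    then show ?thesis using less.prems by auto
  next
    case False
    have "n > 1" using less.prems by presburger
    then obtain p m where p: "prime p" "n = p * m"
      using prime_factor_nat by (metis dvd_def less_irrefl)
    have "odd n" using less.prems by presburger
    then have "odd p" using p(2) by simp
    show ?thesis
    proof (cases "p mod 4 = 3")
      case True
      then show ?thesis using p by auto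
    next
      case False
      with \<open>odd p\<close> have "p mod 4 = 1" by presburger
      then have "m mod 4 = 3" using less.prems p(2) by (metis mod_mult_left_eq mult_1)
      moreover have "m < n"
      proof -
        have "m > 0" using p(2) \<open>n > 1\<close> by (cases m) auto
        then show ?thesis using p prime_gt_1_nat[of p] by simp
      qed
      ultimately obtain q where "prime q" "q dvd m" "q mod 4 = 3" using less.IH by blast
      then show ?thesis using p(2) by auto
    qed
  qed
qed

lemma minus_one_not_square_mod_prime_mod4_eq_3:
  fixes q :: nat and w :: int
  assumes q: "prime q" "q mod 4 = 3"
  shows "\<not> [w^2 = -1] (mod int q)"
proof
  assume w: "[w^2 = -1] (mod int q)"
  have q2: "2 < q" using q(2) by presburger
  then have "\<not> [-1 = 0] (mod int q)" by (simp add: cong_0_iff)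
  with w have "Legendre (-1) (int q) = 1" by (auto simp: Legendre_def QuadRes_def)
  moreover have "[Legendre (-1) (int q) = (-1) ^ ((q - 1) div 2)] (mod int q)"
    using euler_criterion[OF q(1) q2] .
  moreover have "odd ((q - 1) div 2)" using q(2) by presburger
  ultimately have "[1 = -1] (mod int q)" by simp
  then have "q dvd 2" by (simp add: cong_iff_dvd_diff) presburger
  then show False using q2 by (simp add: nat_dvd_not_less)
qed

lemma prime_mod4_eq_3_dvd_sum_squares:
  fixes q :: nat and u v :: int
  assumes q: "prime q" "q mod 4 = 3" and dvd: "int q dvd u^2 + v^2"
  shows "int q dvd v"
proof (rule ccontr)
  assume "\<not> int q dvd v"
  then have "coprime v (int q)"
    using prime_imp_coprime[of "int q" v] q(1) by (simp add: ac_simps)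
  then obtain s where s: "[v * s = 1] (mod int q)" using cong_solve_coprime_int by blast
  have "[(u*s)^2 + 1 = (u*s)^2 + (v*s)^2] (mod int q)"
    using cong_pow[OF s, of 2] by (intro cong_add) (auto simp: cong_sym)
  also have "(u*s)^2 + (v*s)^2 = (u^2 + v^2) * s^2" by (simp add: algebra_simps power2_eq_square)
  also have "[\<dots> = 0] (mod int q)" using dvd by (simp add: cong_0_iff)
  finally have "[(u*s)^2 = -1] (mod int q)" by (simp add: cong_iff_dvd_diff)
  then show False using minus_one_not_square_mod_prime_mod4_eq_3[OF q] by blast
qed

subsection \<open>Primes at which X^2 + N Y^2 is anisotropic\<close>

definition anisotropic_mod :: "nat \<Rightarrow> int \<Rightarrow> bool" where
  "anisotropic_mod q N \<longleftrightarrow> (\<forall>X Y. int q dvd X^2 + N * Y^2 \<longrightarrow> int q dvd X \<and> int q dvd Y)"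

lemma anisotropic_modD:
  assumes "anisotropic_mod q N" "int q dvd X^2 + N * Y^2"
  shows "int q dvd X" "int q dvd Y"
  using assms unfolding anisotropic_mod_def by blast+

lemma anisotropic_mod_if_square_mod:
  fixes q :: nat and z N :: int
  assumes q: "prime q" "q mod 4 = 3" and z: "\<not> int q dvd z" "int q dvd z^2 - N"
  shows "anisotropic_mod q N"
  unfolding anisotropic_mod_def
proof (intro allI impI)
  fix X Y assume dvd: "int q dvd X^2 + N * Y^2"
  have "X^2 + (z*Y)^2 = (X^2 + N * Y^2) + (z^2 - N) * Y^2" by (simp add: algebra_simps)
  also have "int q dvd \<dots>" by (rule dvd_add[OF dvd dvd_mult2[OF z(2)]])
  finally have "int q dvd X^2 + (z*Y)^2" .
  then have "int q dvd (z*Y)^2 + X^2" by (simp only: add.commute)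
  with \<open>int q dvd X^2 + (z*Y)^2\<close> have "int q dvd z * Y" "int q dvd X"
    using prime_mod4_eq_3_dvd_sum_squares[OF q] by blast+
  then show "int q dvd X \<and> int q dvd Y"
    using z(1) q(1) by (simp add: prime_dvd_mult_iff)
qed

lemma exists_anisotropic_prime_of_dvd_square_diff:
  fixes K z N :: int
  assumes "K \<ge> 0" "4 * K + 3 dvd z^2 - N" and "coprime z N"
  shows "\<exists>q. prime q \<and> q mod 4 = 3 \<and> anisotropic_mod q N"
proof -
  have "nat (4 * K + 3) = 4 * nat K + 3" using assms(1) by simp
  then have "nat (4 * K + 3) mod 4 = 3" by simp
  then obtain q where q: "prime q" "q dvd nat (4 * K + 3)" "q mod 4 = 3"
    using prime_factor_mod4_eq_3 by blast
  then have "int q dvd int (nat (4 * K + 3))" by (simp only: int_dvd_int_iff)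
  with assms(1) have "int q dvd 4 * K + 3" by simp
  then have dvd: "int q dvd z^2 - N" using assms(2) by (rule dvd_trans)
  have "\<not> int q dvd z"
  proof
    assume "int q dvd z"
    then have "int q dvd z^2" by (simp add: power2_eq_square)
    then have "int q dvd z^2 - (z^2 - N)" using dvd by (rule dvd_diff)
    then have "int q dvd N" by simp
    with \<open>coprime z N\<close> \<open>int q dvd z\<close> have "is_unit (int q)" by (rule coprime_common_divisor)
    with q(1) show False by simp
  qed
  with q dvd show ?thesis using anisotropic_mod_if_square_mod by blast
qed

lemma coprime_mult_plus_one: "coprime (k * N + 1) (N::int)"
  using gcd_add_mult[of N k 1] by (simp add: coprime_iff_gcd_eq_1 gcd.commute)

lemma exists_anisotropic_prime_mod4_eq_3:
  fixes N :: int
  assumes N: "N > 0" "\<not> 4 dvd N"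
  obtains q where "prime q" "q mod 4 = 3" "anisotropic_mod q N"
proof -
  consider (1) j where "N = 4*j + 1" "j \<ge> 0" | (2) j where "N = 4*j + 2" "j \<ge> 0"
    | (3) j where "N = 8*j + 3" "j \<ge> 0" | (7) j where "N = 8*j + 7" "j \<ge> 0"
  proof -
    have "N = 4*(N div 4) + 1 \<or> N = 4*(N div 4) + 2 \<or> N = 8*(N div 8) + 3 \<or> N = 8*(N div 8) + 7"
      "N div 4 \<ge> 0" "N div 8 \<ge> 0" using N by presburger+
    then show ?thesis using that by blast
  qed
  then have "\<exists>z K. K \<ge> 0 \<and> 4 * K + 3 dvd z^2 - N \<and> coprime z N"
  proof cases
    case 1
    define K where "K = 4*j^2 + 3*j"
    have "(N + 1)^2 - N = (4 * K + 3) * 1" unfolding K_def using 1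
      by (simp add: algebra_simps power2_eq_square)
    then have "4 * K + 3 dvd (N + 1)^2 - N" by (rule dvdI)
    moreover have "K \<ge> 0" unfolding K_def using 1 by simp
    ultimately show ?thesis using coprime_add_one_left[of N] by blast
  next
    case 2
    define K where "K = 4*j^2 + 5*j + 1"
    have "(N + 1)^2 - N = (4 * K + 3) * 1" unfolding K_def using 2
      by (simp add: algebra_simps power2_eq_square)
    then have "4 * K + 3 dvd (N + 1)^2 - N" by (rule dvdI)
    moreover have "K \<ge> 0" unfolding K_def using 2 by simp
    ultimately show ?thesis using coprime_add_one_left[of N] by blast
  next
    case 3
    define K where "K = 32*j^2 + 27*j + 5"
    have "(2 * N + 1)^2 - N = (4 * K + 3) * 2" unfolding K_def using 3
      by (simp add: algebra_simps power2_eq_square)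
    then have "4 * K + 3 dvd (2 * N + 1)^2 - N" by (rule dvdI)
    moreover have "K \<ge> 0" unfolding K_def using 3 by simp
    ultimately show ?thesis using coprime_mult_plus_one[of 2 N] by blast
  next
    case 7
    then have "1^2 - N = (4 * j + 3) * (-2)" by simp
    then have "4 * j + 3 dvd 1^2 - N" by (rule dvdI)
    moreover have "coprime 1 N" by simp
    ultimately show ?thesis using 7 by blast
  qed
  then show ?thesis using exists_anisotropic_prime_of_dvd_square_diff that by blast
qed

lemma odd_prime_not_dvd_2:
  fixes q :: nat
  assumes "prime q" "odd q"
  shows "\<not> q dvd 2"
proof
  assume "q dvd 2"
  then have "q \<le> 2" by (simp add: dvd_imp_le)
  moreover have "q \<noteq> 2" using assms(2) by auto
  ultimately show False using prime_gt_1_nat[OF assms(1)] by simp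
qed

lemma anisotropic_mod_times_4:
  assumes "prime q" "odd q" "anisotropic_mod q N"
  shows "anisotropic_mod q (4 * N)"
  unfolding anisotropic_mod_def
proof (intro allI impI)
  fix X Y assume "int q dvd X^2 + 4 * N * Y^2"
  also have "X^2 + 4 * N * Y^2 = X^2 + N * (2 * Y)^2" by (simp add: power2_eq_square)
  finally have "int q dvd X" "int q dvd 2 * Y" using anisotropic_modD[OF assms(3)] by blast+
  moreover have "\<not> int q dvd 2" using odd_prime_not_dvd_2[OF assms(1,2)] by presburger
  ultimately show "int q dvd X \<and> int q dvd Y" using assms(1) by (simp add: prime_dvd_mult_iff)
qed

lemma exists_odd_anisotropic_prime:
  fixes N :: int
  assumes "N > 0"
  shows "\<exists>q. prime q \<and> odd q \<and> anisotropic_mod q N"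
  using assms
proof (induction "nat N" arbitrary: N rule: less_induct)
  case less
  show ?case
  proof (cases "4 dvd N")
    case True
    then obtain M where "N = 4 * M" by blast
    with less.prems have "M > 0" "nat M < nat N" by simp_all
    then obtain q where "prime q" "odd q" "anisotropic_mod q M" using less.hyps by blast
    with \<open>N = 4 * M\<close> show ?thesis using anisotropic_mod_times_4 by blast
  next
    case False
    then obtain q where "prime q" "q mod 4 = 3" "anisotropic_mod q N"
      using exists_anisotropic_prime_mod4_eq_3 less.prems by blast
    moreover have "odd q" using \<open>q mod 4 = 3\<close> by presburger
    ultimately show ?thesis by blast
  qed
qed

subsection \<open>Positive semidefinite binary forms\<close>

definition never_exactly_dvd :: "nat \<Rightarrow> (int \<Rightarrow> int \<Rightarrow> int) \<Rightarrow> bool" where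
  "never_exactly_dvd q F \<longleftrightarrow> (\<forall>x y. int q dvd F x y \<longrightarrow> (int q)^2 dvd F x y)"

lemma scaled_binary_form_eqs:
  fixes a b c x y :: int
  shows "a * (a*x^2 + 2*b*x*y + c*y^2) = (a*x + b*y)^2 + (a*c - b^2) * y^2"
    and "c * (a*x^2 + 2*b*x*y + c*y^2) = (b*x + c*y)^2 + (a*c - b^2) * x^2"
  by (simp_all add: algebra_simps power2_eq_square)

lemma exists_odd_prime_not_dvd:
  fixes e :: int
  assumes "e \<noteq> 0"
  shows "\<exists>q. prime q \<and> odd q \<and> \<not> int q dvd e"
proof -
  obtain q where q: "prime q" "q > 2 * nat \<bar>e\<bar>" using bigger_prime by blast
  then have "q > 2" using assms by simp
  then have "odd q" using q(1) prime_odd_nat by blast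
  moreover have "\<not> int q dvd e"
    using q(2) assms by (auto dest!: dvd_imp_le_int)
  ultimately show ?thesis using q(1) by blast
qed

lemma never_exactly_dvd_if_multiple_is_square:
  fixes q :: nat and e :: int and F L :: "int \<Rightarrow> int \<Rightarrow> int"
  assumes q: "prime q" "\<not> int q dvd e" and L: "\<And>x y. e * F x y = (L x y)^2"
  shows "never_exactly_dvd q F"
  unfolding never_exactly_dvd_def
proof (intro allI impI)
  fix x y assume "int q dvd F x y"
  have pq: "prime (int q)" using q(1) by simp
  have "int q dvd (L x y)^2" unfolding L[symmetric] using \<open>int q dvd F x y\<close> by (rule dvd_mult)
  then have "int q dvd L x y" by (rule prime_dvd_power[OF pq])
  then have "(int q)^2 dvd e * F x y" unfolding L by (rule dvd_power_same)
  moreover have "coprime ((int q)^2) e" using prime_imp_coprime[OF pq q(2)] by simp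
  ultimately show "(int q)^2 dvd F x y" by (simp add: coprime_dvd_mult_right_iff)
qed

lemma never_exactly_dvd_if_anisotropic_det:
  fixes a b c :: int
  assumes "anisotropic_mod q (a*c - b^2)"
  shows "never_exactly_dvd q (\<lambda>x y. a*x^2 + 2*b*x*y + c*y^2)"
  unfolding never_exactly_dvd_def
proof (intro allI impI)
  fix x y assume F: "int q dvd a*x^2 + 2*b*x*y + c*y^2"
  have "int q dvd a * (a*x^2 + 2*b*x*y + c*y^2)" using F by (rule dvd_mult)
  then have "int q dvd (a*x + b*y)^2 + (a*c - b^2) * y^2" by (simp only: scaled_binary_form_eqs)
  then have "int q dvd y" by (rule anisotropic_modD[OF assms])
  have "int q dvd c * (a*x^2 + 2*b*x*y + c*y^2)" using F by (rule dvd_mult)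
  then have "int q dvd (b*x + c*y)^2 + (a*c - b^2) * x^2" by (simp only: scaled_binary_form_eqs)
  then have "int q dvd x" by (rule anisotropic_modD[OF assms])
  with \<open>int q dvd y\<close> obtain x' y' where "x = int q * x'" "y = int q * y'" by blast
  then have "a*x^2 + 2*b*x*y + c*y^2 = (int q)^2 * (a*x'^2 + 2*b*x'*y' + c*y'^2)"
    by (simp add: algebra_simps power2_eq_square)
  then show "(int q)^2 dvd a*x^2 + 2*b*x*y + c*y^2" by simp
qed

lemma degenerate_binary_form_multiple_is_square:
  fixes a b c :: int
  assumes degenerate: "a * c - b^2 = 0"
  obtains e :: int and L :: "int \<Rightarrow> int \<Rightarrow> int"
  where "e \<noteq> 0" and "\<And>x y. e * (a*x^2 + 2*b*x*y + c*y^2) = (L x y)^2"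
proof -
  consider "a \<noteq> 0" | "a = 0" "c \<noteq> 0" | "a = 0" "c = 0" "b = 0"
    using degenerate by (cases "a = 0"; cases "c = 0") auto
  then show ?thesis
  proof cases
    case 1
    show ?thesis
    proof (rule that[of a "\<lambda>x y. a*x + b*y"])
      show "a * (a*x^2 + 2*b*x*y + c*y^2) = (a*x + b*y)^2" for x y
        using scaled_binary_form_eqs(1)[of a x b y c] degenerate by simp
    qed (use 1 in simp)
  next
    case 2
    show ?thesis
    proof (rule that[of c "\<lambda>x y. b*x + c*y"])
      show "c * (a*x^2 + 2*b*x*y + c*y^2) = (b*x + c*y)^2" for x y
        using scaled_binary_form_eqs(2)[of c a x b y] degenerate by simp
    qed (use 2 in simp)
  next
    case 3
    then show ?thesis using that[of 1 "\<lambda>x y. 0"] by simp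
  qed
qed

lemma exists_prime_never_exactly_dvd_psd_form:
  fixes a b c :: int
  assumes psd: "b^2 \<le> a * c"
  shows "\<exists>q. prime q \<and> odd q \<and> never_exactly_dvd q (\<lambda>x y. a*x^2 + 2*b*x*y + c*y^2)"
proof (cases "b^2 < a * c")
  case True
  then obtain q where "prime q" "odd q" "anisotropic_mod q (a*c - b^2)"
    using exists_odd_anisotropic_prime[of "a*c - b^2"] by auto
  then show ?thesis using never_exactly_dvd_if_anisotropic_det by blast
next
  case False
  with psd have "a * c - b^2 = 0" by simp
  then obtain e L where "e \<noteq> 0" and L: "\<And>x y. e * (a*x^2 + 2*b*x*y + c*y^2) = (L x y)^2"
    using degenerate_binary_form_multiple_is_square by blast
  obtain q where q: "prime q" "odd q" "\<not> int q dvd e"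
    using exists_odd_prime_not_dvd \<open>e \<noteq> 0\<close> by blast
  from q(1,3) L have "never_exactly_dvd q (\<lambda>x y. a*x^2 + 2*b*x*y + c*y^2)"
    by (rule never_exactly_dvd_if_multiple_is_square)
  with q show ?thesis by blast
qed

lemma norm_sq_psd_form:
  fixes W :: param
  shows "\<exists>a b c. b^2 \<le> a * c \<and> norm_sq W i = (\<lambda>x y. a*x^2 + 2*b*x*y + c*y^2)"
proof (intro exI conjI ext)
  let ?a = "\<lambda>j. fst (W i j)" and ?b = "\<lambda>j. snd (W i j)"
  show "norm_sq W i x y = (\<Sum>j<3. ?a j ^ 2) * x^2 + 2 * (\<Sum>j<3. ?a j * ?b j) * x * y
      + (\<Sum>j<3. ?b j ^ 2) * y^2" for x y
    by (simp add: norm_sq_def lin_eval_def numeral_3_eq_3 algebra_simps power2_eq_square)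
  have lagrange: "(\<Sum>j<3. ?a j ^ 2) * (\<Sum>j<3. ?b j ^ 2) - (\<Sum>j<3. ?a j * ?b j)^2
      = (?a 0 * ?b 1 - ?a 1 * ?b 0)^2 + (?a 0 * ?b 2 - ?a 2 * ?b 0)^2 + (?a 1 * ?b 2 - ?a 2 * ?b 1)^2"
    by (simp add: numeral_3_eq_3 numeral_2_eq_2 algebra_simps power2_eq_square)
  have "0 \<le> (\<Sum>j<3. ?a j ^ 2) * (\<Sum>j<3. ?b j ^ 2) - (\<Sum>j<3. ?a j * ?b j)^2"
    unfolding lagrange by (intro add_nonneg_nonneg zero_le_power2)
  then show "(\<Sum>j<3. ?a j * ?b j)^2 \<le> (\<Sum>j<3. ?a j ^ 2) * (\<Sum>j<3. ?b j ^ 2)"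
    by simp
qed

lemma exists_prime_never_exactly_dvd_norm_sq:
  fixes W :: param
  shows "\<exists>q. prime q \<and> odd q \<and> never_exactly_dvd q (norm_sq W 0)"
proof -
  obtain a b c where "b^2 \<le> a * c" "norm_sq W 0 = (\<lambda>x y. a*x^2 + 2*b*x*y + c*y^2)"
    using norm_sq_psd_form by blast
  then show ?thesis using exists_prime_never_exactly_dvd_psd_form[of b a c] by simp
qed

lemma represents_imp_norm_sq:
  assumes "represents W t"
  shows "\<exists>x y. norm_sq W 0 x y = int t"
  using assms unfolding represents_def cycle_param_with_form_def by fastforce

subsection \<open>Square-free numbers in T\<close>

lemma multiplicity_two_times_prod_primes:
  fixes S :: "nat set"
  assumes "finite S" "\<forall>p\<in>S. prime p \<and> odd p" "p \<in> S"
  shows "multiplicity p (2 * \<Prod>S) = 1"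
proof -
  have p: "prime p" "odd p" using assms by auto
  have "multiplicity p (\<Prod>S) = (\<Sum>r\<in>S. multiplicity p r)"
    using assms(1,2) prime_elem_multiplicity_prod_distrib[of p id S] p(1) by fastforce
  also have "\<dots> = (\<Sum>r\<in>S. if r = p then 1 else 0)"
    using assms(2) p(1) by (intro sum.cong) (auto simp: prime_multiplicity_other)
  also have "\<dots> = 1" using assms(1,3) by simp
  finally have "multiplicity p (\<Prod>S) = 1" .
  moreover have "multiplicity p (2::nat) = 0"
    using p odd_prime_not_dvd_2 by (intro not_dvd_imp_multiplicity_0) simp
  moreover have "\<Prod>S \<noteq> 0" using assms(1,2) by auto
  ultimately show ?thesis using p(1) by (simp add: prime_elem_multiplicity_mult_distrib)
qed

lemma prime_exactly_dvd_two_times_prod_primes: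
  fixes S :: "nat set"
  assumes "finite S" "\<forall>p\<in>S. prime p \<and> odd p" "p \<in> S"
  shows "p dvd 2 * \<Prod>S" "\<not> p^2 dvd 2 * \<Prod>S"
proof -
  have "2 * \<Prod>S \<noteq> 0" "\<not> is_unit p" using assms by auto
  note dvd_iff = power_dvd_iff_le_multiplicity[OF this]
  show "p dvd 2 * \<Prod>S" using dvd_iff[of 1] multiplicity_two_times_prod_primes[OF assms] by simp
  show "\<not> p^2 dvd 2 * \<Prod>S" using dvd_iff[of 2] multiplicity_two_times_prod_primes[OF assms] by simp
qed

lemma dvd_sqfree_part:
  assumes "prime p" "t > 0" "odd (multiplicity p t)"
  shows "p dvd sqfree_part t"
proof -
  have "multiplicity p t > 0" using assms(3) by (intro gr0I) auto
  then have "p dvd t" using assms(1,2) by (simp add: prime_multiplicity_gt_zero_iff)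
  then have "p \<in> {p \<in> prime_factors t. odd (multiplicity p t)}"
    using assms by (auto simp: in_prime_factors_iff)
  then show ?thesis unfolding sqfree_part_def using dvd_prodI[of _ p "\<lambda>p. p"] by simp
qed

lemma two_times_prod_primes_in_T_set:
  fixes S :: "nat set"
  assumes "finite S" "\<forall>p\<in>S. prime p \<and> odd p" "5 \<in> S"
  shows "2 * \<Prod>S \<in> T_set"
proof -
  have "odd (\<Prod>S)" using assms(1,2) by (simp add: even_prod_iff)
  then have "2 * \<Prod>S > 0" "2 * \<Prod>S mod 4 = 2" by presburger+
  moreover have "5 dvd sqfree_part (2 * \<Prod>S)"
    using multiplicity_two_times_prod_primes[OF assms] \<open>2 * \<Prod>S > 0\<close>
    by (intro dvd_sqfree_part) auto
  ultimately show ?thesis unfolding T_set_def by (intro CollectI conjI exI[of _ 5]) auto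
qed

theorem theorem8:
  fixes \<P> :: "param set"
  assumes "finite \<P>"
    and "\<forall>W\<in>\<P>. cycle_param W"
  shows "\<exists>t\<in>T_set. \<forall>W\<in>\<P>. \<not> represents W t"
proof -
  obtain q where q: "\<And>W. prime (q W) \<and> odd (q W) \<and> never_exactly_dvd (q W) (norm_sq W 0)"
    using exists_prime_never_exactly_dvd_norm_sq by metis
  define S where "S = insert 5 (q ` \<P>)"
  have S: "finite S" "\<forall>p\<in>S. prime p \<and> odd p" "5 \<in> S"
    unfolding S_def using assms(1) q by auto
  define t where "t = 2 * \<Prod>S"
  have "\<not> represents W t" if "W \<in> \<P>" for W
  proof
    assume "represents W t"
    then obtain x y where F: "norm_sq W 0 x y = int t" using represents_imp_norm_sq by blast
    have "q W \<in> S" using that by (simp add: S_def)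
    then have "q W dvd t" "\<not> (q W)^2 dvd t"
      unfolding t_def using prime_exactly_dvd_two_times_prod_primes[OF S(1,2)] by auto
    then have "int (q W) dvd norm_sq W 0 x y" unfolding F by (simp only: int_dvd_int_iff)
    then have "(int (q W))^2 dvd norm_sq W 0 x y" using q[of W] unfolding never_exactly_dvd_def by blast
    then have "int ((q W)^2) dvd int t" unfolding F by simp
    with \<open>\<not> (q W)^2 dvd t\<close> show False by (simp only: int_dvd_int_iff)
  qed
  moreover have "t \<in> T_set" unfolding t_def using two_times_prod_primes_in_T_set[OF S] .
  ultimately show ?thesis by blast
qed

end
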